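(* Let $\mu,\varepsilon,\nu,\Omega,\omega$ be real or complex parameters with $\mu\neq 0$ and $\nu\notin\{2,3,4,\dots\}$, and consider the grand confluent hypergeometric (GCH) equation $$x\,y''(x)+\left(\mu x^2+\varepsilon x+\nu\right)y'(x)+\left(\Omega x+\varepsilon\omega\right)y(x)=0 .$$ Put $\gamma=\tfrac12(1+\nu)$, $a=\frac{\Omega}{2\mu}$, $\tilde\varepsilon=-\tfrac12\varepsilon x$ and $z=-\tfrac12\mu x^2$, and assume $1-a$ is not a nonpositive integer. Then the function $$ \begin{aligned} y(x)=RW\Big(\omega,\gamma;\tilde\varepsilon;z\Big)=z^{1-\gamma}\frac{\Gamma(1-a)}{\Gamma(2-\gamma)}\Bigg\{&\sum_{i_0=0}^{\infty}\frac{(a+1-\gamma)_{i_0}}{(1)_{i_0}(2-\gamma)_{i_0}}z^{i_0}\\ &+\Bigg\{\sum_{i_0=0}^{\infty}\frac{(i_0+1-\gamma+\frac{\omega}{2})}{(i_0+\frac12)(i_0+\frac32-\gamma)}\frac{(a+1-\gamma)_{i_0}}{(1)_{i_0}(2-\gamma)_{i_0}}\sum_{i_1=i_0}^{\infty}\frac{(a+\frac32-\gamma)_{i_1}(\frac32)_{i_0}(\frac52-\gamma)_{i_0}}{(a+\frac32-\gamma)_{i_0}(\frac32)_{i_1}(\frac52-\gamma)_{i_1}}z^{i_1}\Bigg\}\tilde\varepsilon\\ &+\sum_{n=2}^{\infty}\Bigg\{\sum_{i_0=0}^{\infty}\frac{(i_0+1-\gamma+\frac{\omega}{2})}{(i_0+\frac12)(i_0+\frac32-\gamma)}\frac{(a+1-\gamma)_{i_0}}{(1)_{i_0}(2-\gamma)_{i_0}}\\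 &\quad\times\prod_{k=1}^{n-1}\Bigg\{\sum_{i_k=i_{k-1}}^{\infty}\frac{(i_k+1-\gamma+\frac{\omega}{2}+\frac k2)}{(i_k+\frac12+\frac k2)(i_k+\frac32-\gamma+\frac k2)}\frac{(a+1-\gamma+\frac k2)_{i_k}(1+\frac k2)_{i_{k-1}}(2-\gamma+\frac k2)_{i_{k-1}}}{(a+1-\gamma+\frac k2)_{i_{k-1}}(1+\frac k2)_{i_k}(2-\gamma+\frac k2)_{i_k}}\Bigg\}\\ &\quad\times\sum_{i_n=i_{n-1}}^{\infty}\frac{(a+1-\gamma+\frac n2)_{i_n}(1+\frac n2)_{i_{n-1}}(2-\gamma+\frac n2)_{i_{n-1}}}{(a+1-\gamma+\frac n2)_{i_{n-1}}(1+\frac n2)_{i_n}(2-\gamma+\frac n2)_{i_n}}z^{i_n}\Bigg\}\tilde\varepsilon^{\,n}\Bigg\} \end{aligned} $$ is the power series expansion about $x=0$ of a solution (the solution of the second kind, corresponding to the indicial root $\lambda=1-\nu=2(1-\gamma)$) of the GCH equation.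
   Context: $(x)_n=\Gamma(x+n)/\Gamma(x)$ denotes the Pochhammer symbol (rising factorial), and for integers $m\ge n\ge 0$ a quotient $(b)_m/(b)_n$ is understood as $\prod_{j=n}^{m-1}(b+j)$. In the term with index $n\ge 2$, the product over $k=1,\dots,n-1$ denotes nested summation: the sum over $i_k$ runs from $i_{k-1}$ to $\infty$, with $i_{k-1}$ the summation index of the previous level, and the innermost sum over $i_n$ runs from $i_{n-1}$ to $\infty$. The factor $z^{1-\gamma}$ equals $\left(-\tfrac12\mu\right)^{1-\gamma}x^{2(1-\gamma)}$ for a fixed choice of branch. *)

theory Defs
  imports "HOL-Analysis.Analysis"
begin

text \<open>Quotient of Pochhammer symbols (b)_n / (b)_m for m \<le> n, understood as the
  product of (b+j) for j from m to n-1 (convention of the paper).\<close>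
definition pqt :: "complex \<Rightarrow> nat \<Rightarrow> nat \<Rightarrow> complex" where
  "pqt b m n = (\<Prod>j=m..<n. b + of_nat j)"

definition RW_fac :: "complex \<Rightarrow> complex \<Rightarrow> nat \<Rightarrow> nat \<Rightarrow> complex" where
  "RW_fac g w k i = (of_nat i + 1 - g + w / 2 + of_nat k / 2) /
      ((of_nat i + 1/2 + of_nat k / 2) * (of_nat i + 3/2 - g + of_nat k / 2))"

text \<open>The ratio (a+1-g+k/2)_{j}(1+k/2)_{i}(2-g+k/2)_{i} /
  ((a+1-g+k/2)_{i}(1+k/2)_{j}(2-g+k/2)_{j}), with i = i_{k-1} \<le> j = i_k.\<close>
definition RW_ratio :: "complex \<Rightarrow> complex \<Rightarrow> nat \<Rightarrow> nat \<Rightarrow> nat \<Rightarrow> complex" where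
  "RW_ratio g a k i j =
     pqt (a + 1 - g + of_nat k / 2) i j
     * pochhammer (1 + of_nat k / 2) i * pochhammer (2 - g + of_nat k / 2) i
     / (pochhammer (1 + of_nat k / 2) j * pochhammer (2 - g + of_nat k / 2) j)"

definition RW_A :: "complex \<Rightarrow> complex \<Rightarrow> nat \<Rightarrow> complex" where
  "RW_A g a i = pochhammer (a + 1 - g) i / (pochhammer 1 i * pochhammer (2 - g) i)"

text \<open>RW_in g a w z n m i is the part of the
  n-th term starting at level k = n - m, where i = i_{k-1}:
  for m = 0 it is sum_{i_n = i}^\<infinity> ratio_n(i, i_n) z^{i_n};
  for m > 0 it is sum_{i_k = i}^\<infinity> fac_k(i_k) ratio_k(i, i_k) (level k+1 at i_k).\<close>
fun RW_in :: "complex \<Rightarrow> complex \<Rightarrow> complex \<Rightarrow> complex \<Rightarrow> nat \<Rightarrow> nat \<Rightarrow> nat \<Rightarrow> complex" where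
  "RW_in g a w z n 0 i = (\<Sum>j. RW_ratio g a n i (i + j) * z ^ (i + j))"
| "RW_in g a w z n (Suc m) i =
     (\<Sum>j. RW_fac g w (n - Suc m) (i + j) * RW_ratio g a (n - Suc m) i (i + j)
            * RW_in g a w z n m (i + j))"

definition RW_term :: "complex \<Rightarrow> complex \<Rightarrow> complex \<Rightarrow> complex \<Rightarrow> nat \<Rightarrow> complex" where
  "RW_term g a w z n = (\<Sum>i. RW_fac g w 0 i * RW_A g a i * RW_in g a w z n (n - 1) i)"

definition RW_term0 :: "complex \<Rightarrow> complex \<Rightarrow> complex \<Rightarrow> complex" where
  "RW_term0 g a z = (\<Sum>i. RW_A g a i * z ^ i)"

definition RW_braces :: "complex \<Rightarrow> complex \<Rightarrow> complex \<Rightarrow> complex \<Rightarrow> complex \<Rightarrow> complex" where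
  "RW_braces g a w e z = RW_term0 g a z + RW_term g a w z 1 * e
      + (\<Sum>m. RW_term g a w z (m + 2) * e ^ (m + 2))"

definition RW_converges :: "complex \<Rightarrow> complex \<Rightarrow> complex \<Rightarrow> complex \<Rightarrow> complex \<Rightarrow> bool" where
  "RW_converges g a w e z \<longleftrightarrow>
     summable (\<lambda>i. RW_A g a i * z ^ i)
   \<and> (\<forall>n\<ge>1. summable (\<lambda>i. RW_fac g w 0 i * RW_A g a i * RW_in g a w z n (n - 1) i))
   \<and> (\<forall>n\<ge>1. \<forall>i. summable (\<lambda>j. RW_ratio g a n i (i + j) * z ^ (i + j)))
   \<and> (\<forall>n m i. Suc m < n \<longrightarrow>
        summable (\<lambda>j. RW_fac g w (n - Suc m) (i + j) * RW_ratio g a (n - Suc m) i (i + j)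
                        * RW_in g a w z n m (i + j)))
   \<and> summable (\<lambda>m. RW_term g a w z (m + 2) * e ^ (m + 2))"

text \<open>The function RW(omega, gamma; eps-tilde; z) as a function of x, with
  z^(1-gamma) = (-mu/2)^(1-gamma) x^(2(1-gamma)) (principal branches).\<close>
definition RW_sol :: "complex \<Rightarrow> complex \<Rightarrow> complex \<Rightarrow> complex \<Rightarrow> complex \<Rightarrow> complex \<Rightarrow> complex" where
  "RW_sol mu eps nu Om om x =
     (let g = (1 + nu) / 2; a = Om / (2 * mu); e = - eps * x / 2; z = - mu * x\<^sup>2 / 2 in
      ((- mu / 2) powr (1 - g) * x powr (2 * (1 - g)))
      * (Gamma (1 - a) / Gamma (2 - g)) * RW_braces g a om e z)"

end

theory Submission
  imports Defs
begin

text \<open>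
  Write z = -mu x^2/2 and e = -eps x/2. Every series in the expansion is dominated by an exponential
  series: the Pochhammer ratios of level k satisfy |ratio(i, i + d)| \<le> K^d / d!, and the factors
  are bounded by F / (k + 1); both bounds hold because nu \<notin> {2, 3, ...} keeps the denominators
  3/2 - gamma + m/2 linearly away from 0. All rearrangements are therefore legitimate. Summing the
  nested series from the outermost level inwards, the coefficient of z^J e^n is a finite sum
  P n J \<le> F^n/n! ((n+1) K)^J / J!, so the braces are an entire function
  h x = (\<Sum>N. c N x^N) with c N = (\<Sum>n + 2J = N. P n J (-mu/2)^J (-eps/2)^n).
  The P n J satisfy a two-term recurrence in (n, J), which turns into the three-term Frobenius
  recurrence of the GCH equation at the indicial root lambda = 2 (1 - gamma) = 1 - nu;
  hence x^lambda h x solves the equation off the branch cut.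
\<close>

section \<open>Rearranging absolutely convergent double series\<close>

lemma has_sum_suminf_nat:
  fixes f :: "nat \<Rightarrow> 'a::{topological_comm_monoid_add, t2_space}"
  assumes "f summable_on UNIV"
  shows "(f has_sum suminf f) UNIV"
  using has_sum_infsum[OF assms] sums_unique[OF has_sum_imp_sums[OF has_sum_infsum[OF assms]]]
  by simp

lemma double_series_sums_rows:
  fixes f :: "nat \<times> nat \<Rightarrow> complex"
  assumes "(f has_sum S) UNIV"
  shows "(\<lambda>n. \<Sum>m. f (n, m)) sums S"
proof -
  have "(\<lambda>m. f (n, m)) summable_on UNIV" for n
    using summable_on_SigmaD1[of "\<lambda>n m. f (n, m)" UNIV "\<lambda>_. UNIV" n] assms
    by (auto simp: summable_on_def)
  then have "((\<lambda>m. f (n, m)) has_sum (\<Sum>m. f (n, m))) UNIV" for n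
    by (rule has_sum_suminf_nat)
  then show ?thesis
    using has_sum_SigmaD[where f = f and A = UNIV and B = "\<lambda>_. UNIV"] assms by (auto intro: has_sum_imp_sums)
qed

lemma series_sums_finite_fibres:
  fixes f :: "nat \<times> 'b \<Rightarrow> 'a::{topological_comm_monoid_add, t3_space}"
  assumes "(f has_sum S) (Sigma UNIV B)" and "\<And>n. finite (B n)"
  shows "(\<lambda>n. \<Sum>b\<in>B n. f (n, b)) sums S"
  using has_sum_SigmaD[OF assms(1) has_sum_finite[OF assms(2)]] by (rule has_sum_imp_sums)

lemma triangle_series_sums:
  fixes f :: "nat \<Rightarrow> nat \<Rightarrow> complex"
  assumes "((\<lambda>(i, j). f i (i + j)) has_sum S) UNIV"
  shows "(\<lambda>i. \<Sum>j. f i (i + j)) sums S" and "(\<lambda>J. \<Sum>i\<le>J. f i J) sums S"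
proof -
  show "(\<lambda>i. \<Sum>j. f i (i + j)) sums S"
    using double_series_sums_rows[OF assms] by simp
  have "((\<lambda>(i, j). f i (i + j)) has_sum S) UNIV = ((\<lambda>(J, i). f i J) has_sum S) (Sigma UNIV atMost)"
    by (rule has_sum_reindex_bij_witness[where j = "\<lambda>(i, j). (i + j, i)" and i = "\<lambda>(J, i). (i, J - i)"]) auto
  then have "((\<lambda>(J, i). f i J) has_sum S) (Sigma UNIV atMost)"
    using assms by blast
  then show "(\<lambda>J. \<Sum>i\<le>J. f i J) sums S"
    using series_sums_finite_fibres[where B = atMost] by fastforce
qed

lemma finite_half_le: "finite {J::nat. 2 * J \<le> N}"
  by (rule finite_subset[of _ "{..N}"]) auto

lemma diagonal_series_sums:
  fixes f :: "nat \<times> nat \<Rightarrow> complex"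
  assumes "(f has_sum S) UNIV"
  shows "(\<lambda>N. \<Sum>J\<in>{J. 2 * J \<le> N}. f (N - 2 * J, J)) sums S"
proof -
  have "(f has_sum S) UNIV = ((\<lambda>(N, J). f (N - 2 * J, J)) has_sum S) (Sigma UNIV (\<lambda>N. {J. 2 * J \<le> N}))"
    by (rule has_sum_reindex_bij_witness[where j = "\<lambda>(n, J). (n + 2 * J, J)"
          and i = "\<lambda>(N, J). (N - 2 * J, J)"]) auto
  then have "((\<lambda>(N, J). f (N - 2 * J, J)) has_sum S) (Sigma UNIV (\<lambda>N. {J. 2 * J \<le> N}))"
    using assms by blast
  then show ?thesis
    using series_sums_finite_fibres[where B = "\<lambda>N. {J. 2 * J \<le> N}"] finite_half_le by fastforce
qed

lemma summable_on_pairs_dominated: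
  fixes f :: "nat \<times> nat \<Rightarrow> complex"
  assumes "\<And>i j. norm (f (i, j)) \<le> b i j" and "\<And>i j. 0 \<le> b i j"
    and "\<And>i. (\<lambda>j. b i j) sums h i" and "summable h"
  shows "f summable_on UNIV"
proof -
  have "h i \<ge> 0" for i
    by (rule sums_le[OF _ sums_zero assms(3)]) (simp add: assms(2))
  then have "h summable_on UNIV"
    using assms(4) summable_on_UNIV_nonneg_real_iff by blast
  then have "(\<lambda>(i, j). b i j) summable_on Sigma UNIV (\<lambda>_. UNIV)"
    using assms(2,3) by (intro summable_on_SigmaI[where g = h] sums_nonneg_imp_has_sum) auto
  then have "(\<lambda>(i, j). b i j) summable_on UNIV"
    by simp
  moreover have "norm (f x) \<le> (\<lambda>(i, j). b i j) x" for x
    using assms(1)[of "fst x" "snd x"] by (simp add: case_prod_beta)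
  ultimately have "(\<lambda>x. norm (f x)) summable_on UNIV"
    by (rule Infinite_Sum.abs_summable_on_comparison_test')
  then show ?thesis
    using summable_on_iff_abs_summable_on_complex by blast
qed

lemma summable_on_pairs_product_dominated:
  fixes f :: "nat \<times> nat \<Rightarrow> complex"
  assumes "\<And>i j. norm (f (i, j)) \<le> u i * v j" and "\<And>i. 0 \<le> u i" and "\<And>j. 0 \<le> v j"
    and "summable u" and "summable v"
  shows "f summable_on UNIV"
  using assms
  by (intro summable_on_pairs_dominated[where b = "\<lambda>i j. u i * v j" and h = "\<lambda>i. u i * suminf v"])
     (auto intro: sums_mult summable_mult2)

lemma exp_sums_real: "(\<lambda>n. r ^ n / fact n) sums exp (r :: real)"
  using exp_converges[of r] by (simp add: divide_inverse mult.commute)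

lemma series_exp_majorant:
  fixes f :: "nat \<Rightarrow> complex"
  assumes "0 \<le> A" and "\<And>j. norm (f j) \<le> A * r ^ j / fact j"
  shows "summable (\<lambda>j. norm (f j))" and "summable f" and "norm (suminf f) \<le> A * exp r"
proof -
  have exp_sums: "(\<lambda>j. A * r ^ j / fact j) sums (A * exp r)"
    using sums_mult[OF exp_sums_real[of r], of A] by (simp add: mult_ac)
  show norm_summable: "summable (\<lambda>j. norm (f j))"
    by (rule summable_comparison_test[OF _ sums_summable[OF exp_sums]]) (use assms in auto)
  then show "summable f"
    by (rule summable_norm_cancel)
  have "norm (suminf f) \<le> (\<Sum>j. norm (f j))"
    by (rule summable_norm[OF norm_summable])
  also have "\<dots> \<le> A * exp r"
    using suminf_le[OF assms(2) norm_summable sums_summable[OF exp_sums]] sums_unique[OF exp_sums] by simp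
  finally show "norm (suminf f) \<le> A * exp r" .
qed

section \<open>Bounds on the factors and the Pochhammer ratios\<close>

lemma power_add_div_fact:
  fixes x y :: real
  shows "(x + y) ^ J / fact J = (\<Sum>i\<le>J. x ^ i / fact i * (y ^ (J - i) / fact (J - i)))"
proof -
  have "(x + y) ^ J / fact J = (\<Sum>i\<le>J. of_nat (J choose i) * x ^ i * y ^ (J - i) / fact J)"
    by (simp add: binomial_ring sum_divide_distrib)
  also have "\<dots> = (\<Sum>i\<le>J. x ^ i / fact i * (y ^ (J - i) / fact (J - i)))"
    by (intro sum.cong refl) (simp add: binomial_fact field_simps)
  finally show ?thesis .
qed

lemma norm_add_of_nat_ge_linear:
  fixes q :: complex
  assumes "\<And>m::nat. q + of_nat m \<noteq> 0"
  shows "\<exists>\<delta>>0. \<forall>m::nat. \<delta> * (real m + 1) \<le> norm (q + of_nat m)"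
proof -
  define N :: nat where "N = nat \<lceil>2 * norm q\<rceil> + 1"
  define d where "d = Min ((\<lambda>m. norm (q + of_nat m)) ` {..<N})"
  have N: "N \<ge> 1"
    unfolding N_def by simp
  have fin: "finite ((\<lambda>m. norm (q + of_nat m)) ` {..<N})"
    by simp
  have ne: "(\<lambda>m. norm (q + of_nat m)) ` {..<N} \<noteq> {}"
    using N by (simp add: lessThan_empty_iff)
  have d_pos: "d > 0"
    unfolding d_def using fin ne assms by (subst Min_gr_iff) auto
  have d_le: "d \<le> norm (q + of_nat m)" if "m < N" for m
    unfolding d_def using fin that by (intro Min_le) auto
  define \<delta> where "\<delta> = min (1/2) (d / real N)"
  have "\<delta> * (real m + 1) \<le> norm (q + of_nat m)" for m
  proof (cases "m < N")
    case True
    have "\<delta> * (real m + 1) \<le> (d / real N) * real N"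
      unfolding \<delta>_def using True d_pos N by (intro mult_mono) (auto simp: min_le_iff_disj)
    then show ?thesis
      using d_le[OF True] N by simp
  next
    case False
    then have m: "real m \<ge> 2 * norm q + 1"
      unfolding N_def by linarith
    have "\<delta> * (real m + 1) \<le> (1/2) * (real m + 1)"
      unfolding \<delta>_def by (intro mult_right_mono min.cobounded1) auto
    also have "\<dots> \<le> norm (of_nat m :: complex) - norm q"
      using m by simp
    also have "\<dots> \<le> norm (q + of_nat m)"
      by (metis add.commute norm_diff_ineq)
    finally show ?thesis .
  qed
  moreover have "\<delta> > 0"
    unfolding \<delta>_def using d_pos N by simp
  ultimately show ?thesis
    by blast
qed

lemma norm_nonneg_real_sum:
  "norm (of_real c + of_nat i + of_nat k / 2 :: complex) = c + real i + real k / 2" if "c \<ge> 0"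
proof -
  have "(of_real c + of_nat i + of_nat k / 2 :: complex) = of_real (c + real i + real k / 2)"
    by simp
  then show ?thesis
    using that by (simp only: norm_of_real)
qed

definition RW_step :: "complex \<Rightarrow> complex \<Rightarrow> nat \<Rightarrow> nat \<Rightarrow> complex" where
  "RW_step g a k t = (a + 1 - g + of_nat k / 2 + of_nat t) /
     ((1 + of_nat k / 2 + of_nat t) * (2 - g + of_nat k / 2 + of_nat t))"

lemma RW_A_eq_RW_ratio: "RW_A g a J = RW_ratio g a 0 0 J"
  unfolding RW_A_def RW_ratio_def pqt_def by (simp add: pochhammer_prod)

text \<open>The hypothesis nu \<notin> {2, 3, ...} says 3 - 2 g + m \<noteq> 0 for all m; \<delta> makes it quantitative.\<close>
locale RW_estimates =
  fixes g a w :: complex and \<delta> :: real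
  assumes \<delta>_pos: "\<delta> > 0"
    and \<delta>_le: "\<And>m::nat. \<delta> * (real m + 1) \<le> norm (3 - 2 * g + of_nat m)"
begin

lemma norm_step_denominator_ge: "\<delta> \<le> norm (2 - g + of_nat k / 2 + of_nat t)"
proof -
  have e: "2 - g + of_nat k / 2 + of_nat t = (3 - 2 * g + of_nat (k + 2 * t + 1)) / 2"
    by (simp add: field_simps)
  have "\<delta> * 2 \<le> \<delta> * (real (k + 2 * t + 1) + 1)"
    using \<delta>_pos by (intro mult_left_mono) auto
  then show ?thesis
    unfolding e norm_divide using \<delta>_le[of "k + 2 * t + 1"] by simp
qed

lemma norm_fac_denominator_ge: "\<delta> * (real k + 1) / 2 \<le> norm (of_nat i + 3/2 - g + of_nat k / 2)"
proof -
  have e: "of_nat i + 3/2 - g + of_nat k / 2 = (3 - 2 * g + of_nat (2 * i + k)) / 2"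
    by (simp add: field_simps)
  have "\<delta> * (real k + 1) \<le> \<delta> * (real (2 * i + k) + 1)"
    using \<delta>_pos by (intro mult_left_mono) auto
  then show ?thesis
    unfolding e norm_divide using \<delta>_le[of "2 * i + k"] by simp
qed

definition K_step :: real where
  "K_step = 1 + norm (a - 1) / \<delta>"

definition K_fac :: real where
  "K_fac = 2 * (1 + 2 * norm (1/2 - g + w/2)) / \<delta>"

lemma K_step_nonneg: "K_step \<ge> 0"
  unfolding K_step_def using \<delta>_pos by simp

lemma K_fac_nonneg: "K_fac \<ge> 0"
  unfolding K_fac_def using \<delta>_pos by simp

lemma norm_RW_step_le: "norm (RW_step g a k t) \<le> K_step / (real t + 1)"
proof -
  let ?d1 = "1 + of_nat k / 2 + of_nat t :: complex"
  let ?d2 = "2 - g + of_nat k / 2 + of_nat t"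
  have d1: "norm ?d1 \<ge> real t + 1"
    using norm_nonneg_real_sum[of 1 t k] by (simp add: add_ac)
  have d2: "norm ?d2 \<ge> \<delta>"
    by (rule norm_step_denominator_ge)
  have num: "a + 1 - g + of_nat k / 2 + of_nat t = ?d2 + (a - 1)"
    by simp
  have "norm (RW_step g a k t) = norm (?d2 + (a - 1)) / (norm ?d1 * norm ?d2)"
    unfolding RW_step_def num by (simp add: norm_divide norm_mult)
  also have "\<dots> \<le> (norm ?d2 + norm (a - 1)) / (norm ?d1 * norm ?d2)"
    using \<delta>_pos d1 d2 by (intro divide_right_mono norm_triangle_ineq) auto
  also have "\<dots> = (1 + norm (a - 1) / norm ?d2) / norm ?d1"
  proof -
    have X: "(D + B) / (C * D) = (1 + B / D) / C" if "C > 0" "D > 0" for B C D :: real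
      using that by (simp add: field_simps)
    show ?thesis
      by (rule X) (use \<delta>_pos d1 d2 in linarith)+
  qed
  also have "\<dots> \<le> K_step / (real t + 1)"
    unfolding K_step_def using \<delta>_pos d1 d2
    by (intro frac_le add_left_mono divide_left_mono) auto
  finally show ?thesis .
qed

lemma norm_RW_fac_le: "norm (RW_fac g w k i) \<le> K_fac / (real k + 1)"
proof -
  let ?d1 = "of_nat i + 1/2 + of_nat k / 2 :: complex"
  let ?d3 = "of_nat i + 3/2 - g + of_nat k / 2"
  let ?c = "1/2 - g + w/2"
  have d1: "norm ?d1 \<ge> 1/2"
    using norm_nonneg_real_sum[of "1/2" i k] by (simp add: add_ac)
  have d3: "norm ?d3 \<ge> \<delta> * (real k + 1) / 2" and d3_pos: "\<delta> * (real k + 1) / 2 > 0"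
    using norm_fac_denominator_ge \<delta>_pos by auto
  have num: "of_nat i + 1 - g + w / 2 + of_nat k / 2 = ?d1 + ?c"
    by simp
  have "norm (RW_fac g w k i) = norm (?d1 + ?c) / (norm ?d1 * norm ?d3)"
    unfolding RW_fac_def num by (simp add: norm_divide norm_mult)
  also have "\<dots> \<le> (norm ?d1 + norm ?c) / (norm ?d1 * norm ?d3)"
    using d1 d3 d3_pos by (intro divide_right_mono norm_triangle_ineq) auto
  also have "\<dots> = (1 + norm ?c / norm ?d1) / norm ?d3"
  proof -
    have X: "(C + B) / (C * D) = (1 + B / C) / D" if "C > 0" "D > 0" for B C D :: real
      using that by (simp add: field_simps)
    show ?thesis
      by (rule X) (use d1 d3 d3_pos in linarith)+
  qed
  also have "\<dots> \<le> (1 + 2 * norm ?c) / (\<delta> * (real k + 1) / 2)"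
  proof (intro frac_le add_left_mono)
    show "norm ?c / norm ?d1 \<le> 2 * norm ?c"
    proof -
      have "?d1 \<noteq> 0"
        using d1 by (intro notI) simp
      then show ?thesis
        using divide_left_mono[OF d1, of "norm ?c"] by (simp add: mult.commute)
    qed
  qed (use d3 d3_pos in auto)
  also have "\<dots> = K_fac / (real k + 1)"
    unfolding K_fac_def using \<delta>_pos by (simp add: field_simps)
  finally show ?thesis .
qed

lemma norm_RW_fac_le_const: "norm (RW_fac g w k i) \<le> K_fac"
  using norm_RW_fac_le[of k i] K_fac_nonneg divide_left_mono[of 1 "real k + 1" K_fac] by simp

lemma pochhammer_nonzero:
  "pochhammer (2 - g + of_nat k / 2) j \<noteq> 0" "pochhammer (1 + of_nat k / 2 :: complex) j \<noteq> 0"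
proof -
  show "pochhammer (2 - g + of_nat k / 2) j \<noteq> 0"
  proof
    assume "pochhammer (2 - g + of_nat k / 2) j = 0"
    then obtain t where "2 - g + of_nat k / 2 + of_nat t = 0"
      by (auto simp: pochhammer_eq_0_iff algebra_simps)
    then show False
      using norm_step_denominator_ge[of k t] \<delta>_pos by simp
  qed
  show "pochhammer (1 + of_nat k / 2 :: complex) j \<noteq> 0"
  proof
    assume "pochhammer (1 + of_nat k / 2 :: complex) j = 0"
    then obtain t where "1 + of_nat k / 2 = - (of_nat t :: complex)"
      by (auto simp: pochhammer_eq_0_iff)
    then have "of_real 1 + of_nat t + of_nat k / 2 = (0 :: complex)"
      by (simp add: eq_neg_iff_add_eq_0 add_ac)
    then show False
      using norm_nonneg_real_sum[of 1 t k] by simp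
  qed
qed

lemma RW_ratio_same [simp]: "RW_ratio g a k i i = 1"
  unfolding RW_ratio_def pqt_def using pochhammer_nonzero[of k i] by simp

lemma RW_ratio_Suc:
  assumes "i \<le> j"
  shows "RW_ratio g a k i (Suc j) = RW_ratio g a k i j * RW_step g a k j"
proof -
  have "2 - g + of_nat k / 2 + of_nat j \<noteq> 0"
    using norm_step_denominator_ge[of k j] \<delta>_pos by auto
  moreover have "1 + of_nat k / 2 + of_nat j \<noteq> (0::complex)"
    using norm_nonneg_real_sum[of 1 j k] by (auto simp: add_ac)
  moreover have "(x1 * x2 * x3 * x4) / (x5 * x6 * (x7 * x8)) = (x1 * x3 * x4 / (x5 * x7)) * (x2 / (x6 * x8))"
    for x1 x2 x3 x4 x5 x6 x7 x8 :: complex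
    by (simp add: divide_inverse mult_ac)
  ultimately show ?thesis
    unfolding RW_ratio_def pqt_def RW_step_def pochhammer_Suc prod.atLeastLessThan_Suc[OF assms]
    by (simp only: add.assoc)
qed

lemma norm_RW_ratio_le: "norm (RW_ratio g a k i (i + d)) \<le> K_step ^ d / fact d"
proof (induction d)
  case (Suc d)
  have "norm (RW_ratio g a k i (i + Suc d)) = norm (RW_ratio g a k i (i + d)) * norm (RW_step g a k (i + d))"
    using RW_ratio_Suc[of i "i + d" k] by (simp add: norm_mult)
  also have "\<dots> \<le> (K_step ^ d / fact d) * (K_step / (real (i + d) + 1))"
    using Suc.IH norm_RW_step_le[of k "i + d"] K_step_nonneg by (intro mult_mono) auto
  also have "\<dots> \<le> (K_step ^ d / fact d) * (K_step / (real d + 1))"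
    using K_step_nonneg by (intro mult_left_mono divide_left_mono) auto
  also have "\<dots> = K_step ^ Suc d / fact (Suc d)"
    by (simp add: field_simps)
  finally show ?case .
qed simp

lemma RW_A_Suc: "RW_A g a (Suc J) = RW_step g a 0 J * RW_A g a J"
  using RW_ratio_Suc[of 0 J 0] by (simp add: RW_A_eq_RW_ratio)

end

lemma ex_RW_estimates:
  fixes nu :: complex
  assumes "\<forall>m::nat. m \<ge> 2 \<longrightarrow> nu \<noteq> of_nat m"
  shows "\<exists>\<delta>. RW_estimates ((1 + nu) / 2) \<delta>"
proof -
  have "3 - 2 * ((1 + nu) / 2) + of_nat m \<noteq> 0" for m :: nat
  proof
    assume "3 - 2 * ((1 + nu) / 2) + of_nat m = 0"
    then have "2 * nu = 2 * of_nat (m + 2)"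
      by (simp add: field_simps)
    then have "nu = of_nat (m + 2)"
      by (metis mult_cancel_left zero_neq_numeral)
    with assms show False
      by (metis le_add2)
  qed
  then show ?thesis
    using norm_add_of_nat_ge_linear[of "3 - 2 * ((1 + nu) / 2)"] by (auto simp: RW_estimates_def)
qed

section \<open>Collapsing the nested series\<close>

text \<open>The coefficient of z^J e^n in the braces, e standing for the rescaled epsilon: the nested
  series of the n-th term summed from the outermost level inwards.\<close>
fun RW_coeff :: "complex \<Rightarrow> complex \<Rightarrow> complex \<Rightarrow> nat \<Rightarrow> nat \<Rightarrow> complex" where
  "RW_coeff g a w 0 J = RW_A g a J"
| "RW_coeff g a w (Suc n) J =
     (\<Sum>i\<le>J. RW_fac g w n i * RW_coeff g a w n i * RW_ratio g a (Suc n) i J)"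

declare RW_coeff.simps(2) [simp del]

context RW_estimates
begin

lemma norm_RW_coeff_le:
  "norm (RW_coeff g a w n J) \<le> K_fac ^ n / fact n * (real (n + 1) * K_step) ^ J / fact J"
proof (induction n arbitrary: J)
  case 0
  show ?case
    using norm_RW_ratio_le[of 0 0 J] by (simp add: RW_A_eq_RW_ratio)
next
  case (Suc n)
  let ?x = "real (n + 1) * K_step"
  have "norm (RW_coeff g a w (Suc n) J)
      \<le> (\<Sum>i\<le>J. norm (RW_fac g w n i * RW_coeff g a w n i * RW_ratio g a (Suc n) i J))"
    by (simp add: norm_sum RW_coeff.simps(2))
  also have "\<dots> \<le> (\<Sum>i\<le>J. K_fac / (real n + 1) * (K_fac ^ n / fact n * ?x ^ i / fact i)
                          * (K_step ^ (J - i) / fact (J - i)))"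
  proof (rule sum_mono)
    fix i assume "i \<in> {..J}"
    then have "norm (RW_ratio g a (Suc n) i J) \<le> K_step ^ (J - i) / fact (J - i)"
      using norm_RW_ratio_le[of "Suc n" i "J - i"] by simp
    then show "norm (RW_fac g w n i * RW_coeff g a w n i * RW_ratio g a (Suc n) i J)
        \<le> K_fac / (real n + 1) * (K_fac ^ n / fact n * ?x ^ i / fact i) * (K_step ^ (J - i) / fact (J - i))"
      unfolding norm_mult using norm_RW_fac_le[of n i] Suc.IH[of i] K_fac_nonneg K_step_nonneg
      by (intro mult_mono) auto
  qed
  also have "\<dots> = K_fac ^ Suc n / fact (Suc n) * (\<Sum>i\<le>J. ?x ^ i / fact i * (K_step ^ (J - i) / fact (J - i)))"
    by (simp add: sum_distrib_left field_simps)
  also have "\<dots> = K_fac ^ Suc n / fact (Suc n) * ((?x + K_step) ^ J / fact J)"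
    by (simp only: power_add_div_fact)
  also have "\<dots> = K_fac ^ Suc n / fact (Suc n) * (real (Suc n + 1) * K_step) ^ J / fact J"
    by (simp add: algebra_simps)
  finally show ?case .
qed

lemma summable_norm_RW_coeff: "summable (\<lambda>J. norm (RW_coeff g a w n J * z ^ J))"
proof (rule series_exp_majorant(1))
  show "norm (RW_coeff g a w n J * z ^ J) \<le> K_fac ^ n / fact n * (real (n + 1) * K_step * norm z) ^ J / fact J"
    for J
    using mult_right_mono[OF norm_RW_coeff_le, of "norm z ^ J" n J]
    by (simp add: norm_mult norm_power power_mult_distrib)
qed (use K_fac_nonneg in simp)

lemma RW_ratio_row:
  fixes z :: complex
  assumes "0 \<le> C" and "\<And>J. norm (V J) \<le> C * norm z ^ J"
  shows "summable (\<lambda>j. RW_ratio g a k i (i + j) * V (i + j))"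
    and "norm (\<Sum>j. RW_ratio g a k i (i + j) * V (i + j)) \<le> C * norm z ^ i * exp (K_step * norm z)"
proof -
  have bound: "norm (RW_ratio g a k i (i + j) * V (i + j)) \<le> C * norm z ^ i * (K_step * norm z) ^ j / fact j"
    for j
  proof -
    have "norm (RW_ratio g a k i (i + j) * V (i + j)) \<le> K_step ^ j / fact j * (C * norm z ^ (i + j))"
      unfolding norm_mult using norm_RW_ratio_le assms K_step_nonneg by (intro mult_mono) auto
    then show ?thesis
      by (simp add: power_add power_mult_distrib mult_ac)
  qed
  then show "summable (\<lambda>j. RW_ratio g a k i (i + j) * V (i + j))"
    and "norm (\<Sum>j. RW_ratio g a k i (i + j) * V (i + j)) \<le> C * norm z ^ i * exp (K_step * norm z)"
    using series_exp_majorant(2,3)[OF _ bound] assms(1) by simp_all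
qed

lemma RW_in_Suc_eq:
  "RW_in g a w z n (Suc m) i =
     (\<Sum>j. RW_ratio g a (n - Suc m) i (i + j) * (RW_fac g w (n - Suc m) (i + j) * RW_in g a w z n m (i + j)))"
  by (simp add: mult_ac)

lemma norm_RW_fac_mult_le:
  assumes "norm (V J) \<le> C * norm z ^ J"
  shows "norm (RW_fac g w k J * V J) \<le> (K_fac * C) * norm z ^ J"
  unfolding norm_mult mult.assoc using norm_RW_fac_le_const assms K_fac_nonneg by (intro mult_mono) auto

lemma RW_in_bound: "\<exists>C\<ge>0. \<forall>i. norm (RW_in g a w z n m i) \<le> C * norm z ^ i"
proof (induction m)
  case 0
  have "norm (RW_in g a w z n 0 i) \<le> exp (K_step * norm z) * norm z ^ i" for i
    using RW_ratio_row(2)[of 1 "\<lambda>J. z ^ J" z n i] by (simp add: norm_power mult_ac)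
  then show ?case
    by (intro exI[of _ "exp (K_step * norm z)"]) auto
next
  case (Suc m)
  then obtain C where "C \<ge> 0" and C: "\<And>i. norm (RW_in g a w z n m i) \<le> C * norm z ^ i"
    by blast
  have fac_in: "norm (RW_fac g w k J * RW_in g a w z n m J) \<le> (K_fac * C) * norm z ^ J" for k J
    by (rule norm_RW_fac_mult_le[where V = "RW_in g a w z n m", OF C])
  have "norm (RW_in g a w z n (Suc m) i) \<le> (K_fac * C) * norm z ^ i * exp (K_step * norm z)" for i
    unfolding RW_in_Suc_eq
    by (rule RW_ratio_row(2)[of _ "\<lambda>J. RW_fac g w (n - Suc m) J * RW_in g a w z n m J"])
       (use fac_in \<open>C \<ge> 0\<close> K_fac_nonneg in auto)
  then have "norm (RW_in g a w z n (Suc m) i) \<le> (K_fac * C * exp (K_step * norm z)) * norm z ^ i" for i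
    by (simp add: mult_ac)
  then show ?case
    using \<open>C \<ge> 0\<close> K_fac_nonneg by (intro exI[of _ "K_fac * C * exp (K_step * norm z)"]) auto
qed

lemma RW_fac_RW_in_bound: "\<exists>C\<ge>0. \<forall>J. norm (RW_fac g w k J * RW_in g a w z n m J) \<le> C * norm z ^ J"
proof -
  obtain C where "C \<ge> 0" and C: "\<And>J. norm (RW_in g a w z n m J) \<le> C * norm z ^ J"
    using RW_in_bound by blast
  then show ?thesis
    using norm_RW_fac_mult_le[where V = "RW_in g a w z n m", OF C] K_fac_nonneg by (intro exI[of _ "K_fac * C"]) auto
qed

lemma summable_RW_in_level:
  "summable (\<lambda>j. RW_fac g w k (i + j) * RW_ratio g a k i (i + j) * RW_in g a w z n m (i + j))"
proof -
  obtain C where "C \<ge> 0" and "\<And>J. norm (RW_fac g w k J * RW_in g a w z n m J) \<le> C * norm z ^ J"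
    using RW_fac_RW_in_bound by blast
  from RW_ratio_row(1)[OF this] show ?thesis
    by (simp add: mult_ac)
qed

text \<open>Summing over i \<le> J instead of over J \<ge> i, which the product majorant u i * v j
  justifies, absorbs one level of the nesting into RW_coeff.\<close>
lemma RW_coeff_Suc_collapse:
  fixes z :: complex
  assumes "0 \<le> C" and "\<And>J. norm (V J) \<le> C * norm z ^ J"
  shows "(\<lambda>i. RW_fac g w k i * RW_coeff g a w k i * (\<Sum>j. RW_ratio g a (Suc k) i (i + j) * V (i + j)))
           sums (\<Sum>J. RW_coeff g a w (Suc k) J * V J)"
proof -
  define f where "f i J = RW_fac g w k i * RW_coeff g a w k i * (RW_ratio g a (Suc k) i J * V J)" for i J
  define u where "u i = K_fac * norm (RW_coeff g a w k i * z ^ i)" for i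
  define v where "v j = C * (K_step * norm z) ^ j / fact j" for j
  have bound: "norm (f i (i + j)) \<le> u i * v j" for i j
  proof -
    have "norm (f i (i + j))
        \<le> K_fac * norm (RW_coeff g a w k i) * (K_step ^ j / fact j * (C * norm z ^ (i + j)))"
      unfolding f_def norm_mult using norm_RW_fac_le_const norm_RW_ratio_le assms K_step_nonneg K_fac_nonneg
      by (intro mult_mono) auto
    then show ?thesis
      by (simp add: u_def v_def norm_mult norm_power power_add power_mult_distrib mult_ac)
  qed
  have "summable u"
    unfolding u_def by (intro summable_mult summable_norm_RW_coeff)
  moreover have "summable v"
    unfolding v_def using summable_mult[OF sums_summable[OF exp_sums_real], of C "K_step * norm z"]
    by (simp add: mult_ac)
  ultimately have "(\<lambda>(i, j). f i (i + j)) summable_on UNIV"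
    using bound assms(1) K_fac_nonneg K_step_nonneg
    by (intro summable_on_pairs_product_dominated[where u = u and v = v]) (auto simp: u_def v_def)
  then obtain S where S: "((\<lambda>(i, j). f i (i + j)) has_sum S) UNIV"
    by (auto simp: summable_on_def)
  have "(\<Sum>j. f i (i + j)) = RW_fac g w k i * RW_coeff g a w k i * (\<Sum>j. RW_ratio g a (Suc k) i (i + j) * V (i + j))"
    for i
    unfolding f_def using RW_ratio_row(1)[OF assms] by (rule suminf_mult)
  moreover have "(\<Sum>i\<le>J. f i J) = RW_coeff g a w (Suc k) J * V J" for J
    by (simp add: f_def RW_coeff.simps(2) sum_distrib_left sum_distrib_right mult_ac)
  ultimately show ?thesis
    using triangle_series_sums[OF S] by (simp add: sums_iff)
qed

lemma RW_in_collapse: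
  assumes "m < n"
  shows "(\<lambda>i. RW_fac g w (n - m - 1) i * RW_coeff g a w (n - m - 1) i * RW_in g a w z n m i)
           sums (\<Sum>J. RW_coeff g a w n J * z ^ J)"
  using assms
proof (induction m)
  case 0
  then obtain k where "n = Suc k"
    by (cases n) auto
  then show ?case
    using RW_coeff_Suc_collapse[of 1 "\<lambda>J. z ^ J" z k] by (simp add: norm_power)
next
  case (Suc m)
  define k where "k = n - Suc m - 1"
  have k: "n - Suc m = Suc k" "n - m - 1 = Suc k"
    using Suc.prems by (simp_all add: k_def)
  obtain C where "C \<ge> 0" and "\<And>J. norm (RW_fac g w (Suc k) J * RW_in g a w z n m J) \<le> C * norm z ^ J"
    using RW_fac_RW_in_bound by blast
  then have "(\<lambda>i. RW_fac g w k i * RW_coeff g a w k i * RW_in g a w z n (Suc m) i)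
      sums (\<Sum>J. RW_coeff g a w (Suc k) J * (RW_fac g w (Suc k) J * RW_in g a w z n m J))"
    unfolding RW_in_Suc_eq k(1) by (rule RW_coeff_Suc_collapse)
  also have "(\<Sum>J. RW_coeff g a w (Suc k) J * (RW_fac g w (Suc k) J * RW_in g a w z n m J))
      = (\<Sum>J. RW_coeff g a w n J * z ^ J)"
    using Suc.IH Suc.prems unfolding k(2) by (simp add: sums_iff mult_ac)
  finally show ?case
    by (simp add: k_def)
qed

lemma RW_term_sums:
  assumes "1 \<le> n"
  shows "(\<lambda>i. RW_fac g w 0 i * RW_A g a i * RW_in g a w z n (n - 1) i) sums (\<Sum>J. RW_coeff g a w n J * z ^ J)"
  using RW_in_collapse[of "n - 1" n z] assms by simp

lemma RW_term_eq: "1 \<le> n \<Longrightarrow> RW_term g a w z n = (\<Sum>J. RW_coeff g a w n J * z ^ J)"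
  unfolding RW_term_def using RW_term_sums by (simp add: sums_iff)

end

section \<open>The braces as a power series in x\<close>

context RW_estimates
begin

lemma RW_coeff_family_summable: "(\<lambda>(n, J). RW_coeff g a w n J * z ^ J * e ^ n) summable_on UNIV"
proof -
  define r where "r n = real (n + 1) * K_step * norm z" for n
  define b where "b n J = K_fac ^ n * norm e ^ n / fact n * (r n ^ J / fact J)" for n J
  define h where "h n = K_fac ^ n * norm e ^ n / fact n * exp (r n)" for n
  have "norm (RW_coeff g a w n J * z ^ J * e ^ n) \<le> b n J" for n J
    using mult_right_mono[OF norm_RW_coeff_le, of "norm z ^ J * norm e ^ n" n J]
    by (simp add: b_def r_def norm_mult norm_power power_mult_distrib mult_ac)
  moreover have "0 \<le> b n J" for n J
    using K_fac_nonneg K_step_nonneg by (simp add: b_def r_def)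
  moreover have "(\<lambda>J. b n J) sums h n" for n
    unfolding b_def h_def by (intro sums_mult exp_sums_real)
  moreover have "exp (r n) = exp (K_step * norm z) * exp (K_step * norm z) ^ n" for n
    unfolding r_def by (simp add: algebra_simps exp_add exp_of_nat_mult[symmetric])
  then have "summable h"
    unfolding h_def
    using summable_mult[OF sums_summable[OF exp_sums_real], of "exp (K_step * norm z)"
        "K_fac * norm e * exp (K_step * norm z)"]
    by (simp add: power_mult_distrib mult_ac)
  ultimately show ?thesis
    by (intro summable_on_pairs_dominated[where b = b and h = h]) auto
qed

lemma RW_term_series_sums:
  "(\<lambda>n. (\<Sum>J. RW_coeff g a w n J * z ^ J) * e ^ n)
     sums infsum (\<lambda>(n, J). RW_coeff g a w n J * z ^ J * e ^ n) UNIV"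
proof -
  have "(\<Sum>J. RW_coeff g a w n J * z ^ J * e ^ n) = (\<Sum>J. RW_coeff g a w n J * z ^ J) * e ^ n" for n
    using summable_norm_cancel[OF summable_norm_RW_coeff] by (rule suminf_mult2[symmetric])
  then show ?thesis
    using double_series_sums_rows[OF has_sum_infsum[OF RW_coeff_family_summable[of z e]]] by simp
qed

lemma RW_braces_converges: "RW_converges g a w e z"
proof -
  have "summable (\<lambda>m. (\<Sum>J. RW_coeff g a w (m + 2) J * z ^ J) * e ^ (m + 2))"
    using summable_ignore_initial_segment[OF sums_summable[OF RW_term_series_sums], of 2] .
  then have "summable (\<lambda>m. RW_term g a w z (m + 2) * e ^ (m + 2))"
    by (simp only: RW_term_eq[of "_ + 2"] le_add2)
  moreover have "summable (\<lambda>j. RW_ratio g a k i (i + j) * z ^ (i + j))" for k i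
    using RW_ratio_row(1)[of 1 "\<lambda>J. z ^ J" z k i] by (simp add: norm_power)
  ultimately show ?thesis
    unfolding RW_converges_def
    using summable_norm_cancel[OF summable_norm_RW_coeff[of 0]] RW_term_sums[THEN sums_summable]
      summable_RW_in_level
    by auto
qed

lemma has_sum_RW_braces:
  "((\<lambda>(n, J). RW_coeff g a w n J * z ^ J * e ^ n) has_sum RW_braces g a w e z) UNIV"
proof -
  define T where "T n = (\<Sum>J. RW_coeff g a w n J * z ^ J)" for n
  define S where "S = infsum (\<lambda>(n, J). RW_coeff g a w n J * z ^ J * e ^ n) UNIV"
  have sums: "(\<lambda>n. T n * e ^ n) sums S"
    unfolding T_def S_def by (rule RW_term_series_sums)
  have "S = (\<Sum>m. T (m + 2) * e ^ (m + 2)) + (\<Sum>n<2. T n * e ^ n)"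
    using suminf_split_initial_segment[OF sums_summable[OF sums], of 2] sums_unique[OF sums] by simp
  also have "\<dots> = RW_braces g a w e z"
    unfolding RW_braces_def RW_term0_def T_def
    by (simp add: RW_term_eq numeral_2_eq_2 add_ac)
  finally show ?thesis
    unfolding S_def using has_sum_infsum[OF RW_coeff_family_summable[of z e]] by simp
qed

end

text \<open>The coefficient of x^N in the braces evaluated at e = \<alpha> x, z = \<beta> x^2.\<close>
definition RW_xcoeff :: "complex \<Rightarrow> complex \<Rightarrow> complex \<Rightarrow> complex \<Rightarrow> complex \<Rightarrow> nat \<Rightarrow> complex" where
  "RW_xcoeff g a w \<alpha> \<beta> N = (\<Sum>J | 2 * J \<le> N. RW_coeff g a w (N - 2 * J) J * \<beta> ^ J * \<alpha> ^ (N - 2 * J))"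

context RW_estimates
begin

lemma RW_braces_power_series:
  "(\<lambda>N. RW_xcoeff g a w \<alpha> \<beta> N * x ^ N) sums RW_braces g a w (\<alpha> * x) (\<beta> * x\<^sup>2)"
proof -
  have "(\<Sum>J | 2 * J \<le> N. RW_coeff g a w (N - 2 * J) J * (\<beta> * x\<^sup>2) ^ J * (\<alpha> * x) ^ (N - 2 * J))
      = RW_xcoeff g a w \<alpha> \<beta> N * x ^ N" for N
  proof -
    have "x ^ N = (x\<^sup>2) ^ J * x ^ (N - 2 * J)" if "2 * J \<le> N" for J
      using that by (metis le_add_diff_inverse power_add power_mult)
    then show ?thesis
      unfolding RW_xcoeff_def sum_distrib_right
      by (intro sum.cong refl) (simp add: power_mult_distrib mult_ac)
  qed
  then show ?thesis
    using diagonal_series_sums[OF has_sum_RW_braces[of "\<beta> * x\<^sup>2" "\<alpha> * x"]] by simp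
qed

lemma RW_sol_eq:
  assumes "g = (1 + nu) / 2" and "a = Om / (2 * mu)"
  shows "RW_sol mu eps nu Om w = (\<lambda>x. ((- mu / 2) powr (1 - g) * (Gamma (1 - a) / Gamma (2 - g)))
    * (x powr (2 * (1 - g)) * (\<Sum>N. RW_xcoeff g a w (- eps / 2) (- mu / 2) N * x ^ N)))"
proof
  fix x
  have "RW_braces g a w (- eps * x / 2) (- mu * x\<^sup>2 / 2) = (\<Sum>N. RW_xcoeff g a w (- eps / 2) (- mu / 2) N * x ^ N)"
    using RW_braces_power_series[of "- eps / 2" "- mu / 2" x] by (simp add: sums_iff)
  then show "RW_sol mu eps nu Om w x = ((- mu / 2) powr (1 - g) * (Gamma (1 - a) / Gamma (2 - g)))
    * (x powr (2 * (1 - g)) * (\<Sum>N. RW_xcoeff g a w (- eps / 2) (- mu / 2) N * x ^ N))"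
    unfolding RW_sol_def Let_def assms[symmetric] by (simp add: mult_ac)
qed

end

section \<open>The recurrence for the coefficients\<close>

lemma sum_half_le_if_pos:
  fixes h :: "nat \<Rightarrow> 'a::comm_monoid_add"
  shows "(\<Sum>J | 2 * J \<le> M. if 0 < J then h (J - 1) else 0) = (if 2 \<le> M then \<Sum>J | 2 * J \<le> M - 2. h J else 0)"
proof (cases "2 \<le> M")
  case True
  have "(\<Sum>J | 2 * J \<le> M. if 0 < J then h (J - 1) else 0) = (\<Sum>J\<in>{J\<in>{J. 2 * J \<le> M}. 0 < J}. h (J - 1))"
    by (rule sum.inter_filter[symmetric, OF finite_half_le])
  also have "{J\<in>{J. 2 * J \<le> M}. 0 < J} = Suc ` {J. 2 * J \<le> M - 2}"
  proof (intro set_eqI iffI)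
    fix x assume "x \<in> {J\<in>{J. 2 * J \<le> M}. 0 < J}"
    then have "x = Suc (x - 1)" "2 * (x - 1) \<le> M - 2"
      by auto
    then show "x \<in> Suc ` {J. 2 * J \<le> M - 2}"
      by blast
  qed (use True in auto)
  also have "(\<Sum>J\<in>Suc ` {J. 2 * J \<le> M - 2}. h (J - 1)) = (\<Sum>J | 2 * J \<le> M - 2. h J)"
    by (simp add: sum.reindex)
  finally show ?thesis
    using True by simp
next
  case False
  then have "{J. 2 * J \<le> M} = {0}"
    by auto
  then show ?thesis
    using False by simp
qed

lemma sum_half_le_if_less:
  fixes h :: "nat \<Rightarrow> 'a::comm_monoid_add"
  assumes "1 \<le> M"
  shows "(\<Sum>J | 2 * J \<le> M. if 2 * J < M then h J else 0) = (\<Sum>J | 2 * J \<le> M - 1. h J)"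
proof -
  have "(\<Sum>J | 2 * J \<le> M. if 2 * J < M then h J else 0) = (\<Sum>J\<in>{J\<in>{J. 2 * J \<le> M}. 2 * J < M}. h J)"
    by (rule sum.inter_filter[symmetric, OF finite_half_le])
  also have "{J\<in>{J. 2 * J \<le> M}. 2 * J < M} = {J. 2 * J \<le> M - 1}"
    using assms by auto
  finally show ?thesis .
qed

context RW_estimates
begin

lemma RW_coeff_Suc_0: "RW_coeff g a w (Suc n) 0 = RW_fac g w n 0 * RW_coeff g a w n 0"
  by (simp add: RW_coeff.simps(2))

lemma RW_coeff_Suc_Suc:
  "RW_coeff g a w (Suc n) (Suc J) =
     RW_step g a (Suc n) J * RW_coeff g a w (Suc n) J + RW_fac g w n (Suc J) * RW_coeff g a w n (Suc J)"
proof -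
  have "(\<Sum>i\<le>J. RW_fac g w n i * RW_coeff g a w n i * RW_ratio g a (Suc n) i (Suc J))
      = RW_step g a (Suc n) J * (\<Sum>i\<le>J. RW_fac g w n i * RW_coeff g a w n i * RW_ratio g a (Suc n) i J)"
    by (simp add: sum_distrib_left RW_ratio_Suc mult_ac)
  then show ?thesis
    by (simp add: RW_coeff.simps(2))
qed

lemma RW_step_mult:
  assumes "N = n + 2 * Suc J"
  shows "of_nat N * (of_nat N + 2 - 2 * g) * RW_step g a n J = 4 * (a - g + of_nat N / 2)"
proof -
  let ?d1 = "1 + of_nat n / 2 + of_nat J :: complex"
  let ?d2 = "2 - g + of_nat n / 2 + of_nat J"
  have "?d1 \<noteq> 0"
    using norm_nonneg_real_sum[of 1 J n] by (auto simp: add_ac)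
  moreover have "?d2 \<noteq> 0"
    using norm_step_denominator_ge[of n J] \<delta>_pos by auto
  moreover have "of_nat N * (of_nat N + 2 - 2 * g) = 4 * (?d1 * ?d2)"
    unfolding assms by (simp add: field_simps)
  ultimately have "of_nat N * (of_nat N + 2 - 2 * g) * RW_step g a n J = 4 * (a + 1 - g + of_nat n / 2 + of_nat J)"
    unfolding RW_step_def by simp
  also have "\<dots> = 4 * (a - g + of_nat N / 2)"
    unfolding assms by (simp add: field_simps)
  finally show ?thesis .
qed

lemma RW_fac_mult:
  assumes "N = Suc n + 2 * i"
  shows "of_nat N * (of_nat N + 2 - 2 * g) * RW_fac g w n i = 4 * (of_nat N / 2 + 1/2 - g + w / 2)"
proof -
  let ?d1 = "of_nat i + 1/2 + of_nat n / 2 :: complex"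
  let ?d3 = "of_nat i + 3/2 - g + of_nat n / 2"
  have "?d1 \<noteq> 0"
    using norm_nonneg_real_sum[of "1/2" i n] by (auto simp: add_ac)
  moreover have "0 < \<delta> * (real n + 1) / 2"
    using \<delta>_pos by simp
  then have "?d3 \<noteq> 0"
    using norm_fac_denominator_ge[of n i] by auto
  moreover have "of_nat N * (of_nat N + 2 - 2 * g) = 4 * (?d1 * ?d3)"
    unfolding assms by (simp add: field_simps)
  ultimately have "of_nat N * (of_nat N + 2 - 2 * g) * RW_fac g w n i = 4 * (of_nat i + 1 - g + w / 2 + of_nat n / 2)"
    unfolding RW_fac_def by simp
  also have "\<dots> = 4 * (of_nat N / 2 + 1/2 - g + w / 2)"
    unfolding assms by (simp add: field_simps)
  finally show ?thesis .
qed

lemma RW_coeff_rec: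
  assumes "N = n + 2 * J" and "N \<noteq> 0"
  shows "of_nat N * (of_nat N + 2 - 2 * g) * RW_coeff g a w n J
    = (if J > 0 then 4 * (a - g + of_nat N / 2) * RW_coeff g a w n (J - 1) else 0)
    + (if n > 0 then 4 * (of_nat N / 2 + 1/2 - g + w / 2) * RW_coeff g a w (n - 1) J else 0)"
proof (cases n; cases J)
  fix J' assume n: "n = 0" and J: "J = Suc J'"
  have "of_nat N * (of_nat N + 2 - 2 * g) * RW_coeff g a w n J
      = (of_nat N * (of_nat N + 2 - 2 * g) * RW_step g a 0 J') * RW_A g a J'"
    by (simp add: n J RW_A_Suc mult_ac)
  also have "\<dots> = 4 * (a - g + of_nat N / 2) * RW_A g a J'"
    by (subst RW_step_mult) (simp_all add: assms(1) n J)
  finally show ?thesis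
    by (simp add: n J)
next
  fix n' assume n: "n = Suc n'" and J: "J = 0"
  have "of_nat N * (of_nat N + 2 - 2 * g) * RW_coeff g a w n J
      = (of_nat N * (of_nat N + 2 - 2 * g) * RW_fac g w n' 0) * RW_coeff g a w n' 0"
    by (simp add: n J RW_coeff_Suc_0 mult_ac)
  also have "\<dots> = 4 * (of_nat N / 2 + 1/2 - g + w / 2) * RW_coeff g a w n' 0"
    by (subst RW_fac_mult) (simp_all add: assms(1) n J)
  finally show ?thesis
    by (simp add: n J)
next
  fix n' J' assume n: "n = Suc n'" and J: "J = Suc J'"
  have "of_nat N * (of_nat N + 2 - 2 * g) * RW_coeff g a w n J
      = (of_nat N * (of_nat N + 2 - 2 * g) * RW_step g a n J') * RW_coeff g a w n J'
        + (of_nat N * (of_nat N + 2 - 2 * g) * RW_fac g w n' J) * RW_coeff g a w n' J"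
    by (simp add: n J RW_coeff_Suc_Suc algebra_simps)
  also have "\<dots> = 4 * (a - g + of_nat N / 2) * RW_coeff g a w n J'
      + 4 * (of_nat N / 2 + 1/2 - g + w / 2) * RW_coeff g a w n' J"
  proof -
    have "of_nat N * (of_nat N + 2 - 2 * g) * RW_step g a n J' = 4 * (a - g + of_nat N / 2)"
      by (rule RW_step_mult) (simp add: assms(1) J)
    moreover have "of_nat N * (of_nat N + 2 - 2 * g) * RW_fac g w n' J = 4 * (of_nat N / 2 + 1/2 - g + w / 2)"
      by (rule RW_fac_mult) (simp add: assms(1) n)
    ultimately show ?thesis
      by (simp only:)
  qed
  finally show ?thesis
    by (simp add: n J)
qed (use assms in simp)

lemma RW_xcoeff_term_rec:
  fixes \<alpha> \<beta> :: complex
  assumes "2 * J \<le> M" and "1 \<le> M"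
  defines "t \<equiv> \<lambda>n J. RW_coeff g a w n J * \<beta> ^ J * \<alpha> ^ n"
  shows "of_nat M * (of_nat M + 2 - 2 * g) * t (M - 2 * J) J
    = (if 0 < J then 4 * (a - g + of_nat M / 2) * \<beta> * t (M - 2 - 2 * (J - 1)) (J - 1) else 0)
    + (if 2 * J < M then 4 * (of_nat M / 2 + 1/2 - g + w / 2) * \<alpha> * t (M - 1 - 2 * J) J else 0)"
proof -
  have "of_nat M * (of_nat M + 2 - 2 * g) * t (M - 2 * J) J
      = (of_nat M * (of_nat M + 2 - 2 * g) * RW_coeff g a w (M - 2 * J) J) * \<beta> ^ J * \<alpha> ^ (M - 2 * J)"
    by (simp add: t_def mult_ac)
  also have "\<dots> = (if 0 < J then 4 * (a - g + of_nat M / 2) * RW_coeff g a w (M - 2 * J) (J - 1) else 0)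
        * \<beta> ^ J * \<alpha> ^ (M - 2 * J)
      + (if 0 < M - 2 * J then 4 * (of_nat M / 2 + 1/2 - g + w / 2) * RW_coeff g a w (M - 2 * J - 1) J else 0)
        * \<beta> ^ J * \<alpha> ^ (M - 2 * J)"
    by (subst RW_coeff_rec[of M "M - 2 * J" J]) (use assms(1,2) in \<open>simp_all add: distrib_right\<close>)
  also have "\<dots> = (if 0 < J then 4 * (a - g + of_nat M / 2) * \<beta> * t (M - 2 - 2 * (J - 1)) (J - 1) else 0)
    + (if 2 * J < M then 4 * (of_nat M / 2 + 1/2 - g + w / 2) * \<alpha> * t (M - 1 - 2 * J) J else 0)"
  proof -
    have "\<beta> ^ J = \<beta> * \<beta> ^ (J - 1)" and "M - 2 - 2 * (J - 1) = M - 2 * J" if "0 < J"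
      using that by (simp_all add: power_eq_if)
    moreover have "\<alpha> ^ (M - 2 * J) = \<alpha> * \<alpha> ^ (M - 1 - 2 * J)" and "M - 2 * J - 1 = M - 1 - 2 * J"
      if "2 * J < M"
      using that by (simp_all add: power_eq_if)
    ultimately show ?thesis
      by (simp add: t_def mult_ac)
  qed
  finally show ?thesis .
qed

lemma RW_xcoeff_rec:
  assumes "1 \<le> M"
  shows "of_nat M * (of_nat M + 2 - 2 * g) * RW_xcoeff g a w \<alpha> \<beta> M
    = (if 2 \<le> M then 4 * (a - g + of_nat M / 2) * \<beta> * RW_xcoeff g a w \<alpha> \<beta> (M - 2) else 0)
      + 4 * (of_nat M / 2 + 1/2 - g + w / 2) * \<alpha> * RW_xcoeff g a w \<alpha> \<beta> (M - 1)"
proof -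
  define t where "t n J = RW_coeff g a w n J * \<beta> ^ J * \<alpha> ^ n" for n J
  define A where "A = 4 * (a - g + of_nat M / 2) * \<beta>"
  define B where "B = 4 * (of_nat M / 2 + 1/2 - g + w / 2) * \<alpha>"
  have xc: "RW_xcoeff g a w \<alpha> \<beta> N = (\<Sum>J | 2 * J \<le> N. t (N - 2 * J) J)" for N
    unfolding RW_xcoeff_def t_def ..
  have "of_nat M * (of_nat M + 2 - 2 * g) * RW_xcoeff g a w \<alpha> \<beta> M
      = (\<Sum>J | 2 * J \<le> M. (if 0 < J then A * t (M - 2 - 2 * (J - 1)) (J - 1) else 0)
                          + (if 2 * J < M then B * t (M - 1 - 2 * J) J else 0))"
    unfolding xc sum_distrib_left A_def B_def t_def
    by (intro sum.cong refl) (use RW_xcoeff_term_rec assms in \<open>simp add: mult.assoc\<close>)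
  also have "\<dots> = (if 2 \<le> M then \<Sum>J | 2 * J \<le> M - 2. A * t (M - 2 - 2 * J) J else 0)
      + (\<Sum>J | 2 * J \<le> M - 1. B * t (M - 1 - 2 * J) J)"
    unfolding sum.distrib
    using sum_half_le_if_pos[of "\<lambda>J. A * t (M - 2 - 2 * J) J" M]
      sum_half_le_if_less[OF assms, of "\<lambda>J. B * t (M - 1 - 2 * J) J"]
    by simp
  finally show ?thesis
    by (simp add: xc A_def B_def sum_distrib_left mult.assoc)
qed

lemma RW_xcoeff_frobenius_rec:
  fixes mu eps Om :: complex
  assumes "Om = 2 * a * mu"
  defines "c \<equiv> RW_xcoeff g a w (- eps / 2) (- mu / 2)"
  shows "of_nat (N + 1) * (of_nat (N + 1) + 2 * (1 - g)) * c (N + 1) + eps * (of_nat N + 2 * (1 - g) + w) * c N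
      + (if N \<ge> 1 then (mu * (of_nat N - 1 + 2 * (1 - g)) + Om) * c (N - 1) else 0) = 0"
proof -
  have A: "4 * (a - g + of_nat (N + 1) / 2) * (- mu / 2) = - (mu * (of_nat N - 1 + 2 * (1 - g)) + Om)"
    unfolding assms(1) by (simp add: field_simps)
  have B: "4 * (of_nat (N + 1) / 2 + 1/2 - g + w / 2) * (- eps / 2) = - eps * (of_nat N + 2 * (1 - g) + w)"
    by (simp add: field_simps)
  have "of_nat (N + 1) * (of_nat (N + 1) + 2 * (1 - g)) * c (N + 1)
      = (if N \<ge> 1 then (4 * (a - g + of_nat (N + 1) / 2) * (- mu / 2)) * c (N - 1) else 0)
        + (4 * (of_nat (N + 1) / 2 + 1/2 - g + w / 2) * (- eps / 2)) * c N"
    using RW_xcoeff_rec[of "N + 1" "- eps / 2" "- mu / 2"]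
    unfolding c_def by (cases "N \<ge> 1") (simp_all add: right_diff_distrib add_diff_eq mult.assoc)
  then show ?thesis
    unfolding A B by (cases "N \<ge> 1") (simp_all add: algebra_simps)
qed

end

section \<open>Frobenius series\<close>

definition coeff_shift :: "(nat \<Rightarrow> 'a::zero) \<Rightarrow> nat \<Rightarrow> 'a" where
  "coeff_shift d N = (if N = 0 then 0 else d (N - 1))"

lemma coeff_shift_sums:
  fixes d :: "nat \<Rightarrow> 'a::real_normed_field"
  assumes "(\<lambda>N. d N * x ^ N) sums S"
  shows "(\<lambda>N. coeff_shift d N * x ^ N) sums (x * S)"
proof -
  have "(\<lambda>N. coeff_shift d (Suc N) * x ^ Suc N) sums (x * S)"
    using sums_mult[OF assms, of x] by (simp add: coeff_shift_def mult_ac)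
  then show ?thesis
    by (subst (asm) sums_Suc_iff) (simp add: coeff_shift_def)
qed

lemma frobenius_series_identity:
  fixes c :: "nat \<Rightarrow> complex" and lam mu eps Om om x :: complex
  assumes conv: "\<And>x. summable (\<lambda>N. c N * x ^ N)"
    and rec: "\<And>N. of_nat (N + 1) * (of_nat (N + 1) + lam) * c (N + 1) + eps * (of_nat N + lam + om) * c N
        + (if N \<ge> 1 then (mu * (of_nat N - 1 + lam) + Om) * c (N - 1) else 0) = 0"
  defines "h \<equiv> \<lambda>x. \<Sum>N. c N * x ^ N"
    and "h1 \<equiv> \<lambda>x. \<Sum>N. diffs c N * x ^ N"
    and "h2 \<equiv> \<lambda>x. \<Sum>N. diffs (diffs c) N * x ^ N"
  shows "x * h2 x + (lam + 1) * h1 x + (mu * x + eps) * (lam * h x + x * h1 x) + (Om * x + eps * om) * h x = 0"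
proof -
  have s0: "(\<lambda>N. c N * x ^ N) sums h x"
    unfolding h_def using conv summable_sums by blast
  have conv1: "summable (\<lambda>N. diffs c N * x ^ N)" for x
    by (rule termdiff_converges_all[OF conv])
  have s1: "(\<lambda>N. diffs c N * x ^ N) sums h1 x"
    unfolding h1_def using conv1 summable_sums by blast
  have s2: "(\<lambda>N. diffs (diffs c) N * x ^ N) sums h2 x"
    unfolding h2_def using termdiff_converges_all[OF conv1] summable_sums by blast
  have scale: "(\<lambda>N. (k * d N) * x ^ N) sums (k * S)" if "(\<lambda>N. d N * x ^ N) sums S" for k d S
    using sums_mult[OF that, of k] by (simp add: mult.assoc)
  \<comment> \<open>q N is the coefficient of x^N on the left-hand side; the recurrence says it vanishes.\<close>
  define q where "q N = coeff_shift (diffs (diffs c)) N + (lam + 1) * diffs c N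
     + mu * lam * coeff_shift c N + eps * lam * c N + mu * coeff_shift (coeff_shift (diffs c)) N
     + eps * coeff_shift (diffs c) N + Om * coeff_shift c N + eps * om * c N" for N
  have "(\<lambda>N. q N * x ^ N) sums (x * h2 x + (lam + 1) * h1 x + mu * lam * (x * h x) + eps * lam * h x
     + mu * (x * (x * h1 x)) + eps * (x * h1 x) + Om * (x * h x) + eps * om * h x)"
    unfolding q_def distrib_right
    by (intro sums_add coeff_shift_sums scale s0 s1 s2)
  moreover have "q N = 0" for N
  proof (cases N)
    case 0
    then show ?thesis
      using rec[of 0] by (simp add: q_def coeff_shift_def diffs_def algebra_simps)
  next
    case (Suc M)
    then show ?thesis
      using rec[of N] by (cases M) (simp_all add: q_def coeff_shift_def diffs_def algebra_simps)
  qed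
  ultimately have "x * h2 x + (lam + 1) * h1 x + mu * lam * (x * h x) + eps * lam * h x
     + mu * (x * (x * h1 x)) + eps * (x * h1 x) + Om * (x * h x) + eps * om * h x = 0"
    using sums_unique sums_zero by fastforce
  then show ?thesis
    by (simp add: algebra_simps)
qed

lemma powr_mult_derivs:
  fixes h h1 h2 :: "complex \<Rightarrow> complex" and lam C x :: complex
  assumes dh: "\<And>x. (h has_field_derivative h1 x) (at x)"
    and dh1: "\<And>x. (h1 has_field_derivative h2 x) (at x)"
    and x: "x \<in> - \<real>\<^sub>\<le>\<^sub>0"
  defines "y \<equiv> \<lambda>x. C * (x powr lam * h x)"
  shows "(y has_field_derivative C * x powr lam * (lam / x * h x + h1 x)) (at x)"
    and "deriv (deriv y) x = C * x powr lam * (lam * (lam - 1) / x\<^sup>2 * h x + 2 * lam / x * h1 x + h2 x)"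
proof -
  define y1 where "y1 x = C * (lam * x powr (lam - 1) * h x + h1 x * x powr lam)" for x
  define y2 where "y2 x = C * (lam * ((lam - 1) * x powr (lam - 1 - 1)) * h x + h1 x * (lam * x powr (lam - 1))
        + (h2 x * x powr lam + lam * x powr (lam - 1) * h1 x))" for x
  have dy: "(y has_field_derivative y1 z) (at z)" if "z \<in> - \<real>\<^sub>\<le>\<^sub>0" for z
    unfolding y_def y1_def using that
    by (intro DERIV_cmult DERIV_mult has_field_derivative_powr dh) auto
  have dy1: "(y1 has_field_derivative y2 x) (at x)"
    unfolding y1_def y2_def using x
    by (intro DERIV_cmult DERIV_add DERIV_mult has_field_derivative_powr dh dh1) auto
  have "(deriv y has_field_derivative y2 x) (at x)"
    by (rule has_field_derivative_transform_within_open[OF dy1 _ x])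
       (auto simp: open_Compl DERIV_imp_deriv[OF dy])
  then have "deriv (deriv y) x = y2 x"
    by (rule DERIV_imp_deriv)
  moreover have "x \<noteq> 0"
    using x by auto
  then have p: "x powr (s - 1) = x powr s / x" for s
    by (simp add: powr_def left_diff_distrib exp_diff)
  have "y1 x = C * x powr lam * (lam / x * h x + h1 x)"
    unfolding y1_def p by (simp add: field_simps)
  then show "(y has_field_derivative C * x powr lam * (lam / x * h x + h1 x)) (at x)"
    using dy[OF x] by simp
  have "y2 x = C * x powr lam * (lam * (lam - 1) / x\<^sup>2 * h x + 2 * lam / x * h1 x + h2 x)"
    unfolding y2_def p[of "lam - 1"] p[of lam] using \<open>x \<noteq> 0\<close> by (simp add: field_simps power2_eq_square)
  ultimately show "deriv (deriv y) x = C * x powr lam * (lam * (lam - 1) / x\<^sup>2 * h x + 2 * lam / x * h1 x + h2 x)"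
    by simp
qed

lemma frobenius_solution:
  fixes c :: "nat \<Rightarrow> complex" and lam mu eps Om om C :: complex
  assumes conv: "\<And>x. summable (\<lambda>N. c N * x ^ N)"
    and rec: "\<And>N. of_nat (N + 1) * (of_nat (N + 1) + lam) * c (N + 1) + eps * (of_nat N + lam + om) * c N
        + (if N \<ge> 1 then (mu * (of_nat N - 1 + lam) + Om) * c (N - 1) else 0) = 0"
  defines "y \<equiv> \<lambda>x. C * (x powr lam * (\<Sum>N. c N * x ^ N))"
  shows "y holomorphic_on - \<real>\<^sub>\<le>\<^sub>0"
    and "\<And>x. x \<in> - \<real>\<^sub>\<le>\<^sub>0 \<Longrightarrow>
      x * deriv (deriv y) x + (mu * x\<^sup>2 + eps * x + (1 - lam)) * deriv y x + (Om * x + eps * om) * y x = 0"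
proof -
  define h where "h = (\<lambda>x. \<Sum>N. c N * x ^ N)"
  define h1 where "h1 = (\<lambda>x. \<Sum>N. diffs c N * x ^ N)"
  define h2 where "h2 = (\<lambda>x. \<Sum>N. diffs (diffs c) N * x ^ N)"
  have dh: "(h has_field_derivative h1 x) (at x)" for x
    unfolding h_def h1_def by (rule termdiffs_strong_converges_everywhere[OF conv])
  have dh1: "(h1 has_field_derivative h2 x) (at x)" for x
    unfolding h1_def h2_def by (rule termdiffs_strong_converges_everywhere[OF termdiff_converges_all[OF conv]])
  have y_eq: "y = (\<lambda>x. C * (x powr lam * h x))"
    unfolding y_def h_def ..
  note derivs = powr_mult_derivs[OF dh dh1, where C = C and lam = lam, folded y_eq]
  show "y holomorphic_on - \<real>\<^sub>\<le>\<^sub>0"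
    using derivs(1) by (auto simp: holomorphic_on_open open_Compl)
  fix x :: complex
  assume x: "x \<in> - \<real>\<^sub>\<le>\<^sub>0"
  then have "x \<noteq> 0"
    by auto
  have "x * deriv (deriv y) x + (mu * x\<^sup>2 + eps * x + (1 - lam)) * deriv y x + (Om * x + eps * om) * y x
      = C * x powr lam * (x * h2 x + (lam + 1) * h1 x + (mu * x + eps) * (lam * h x + x * h1 x)
          + (Om * x + eps * om) * h x)"
  proof -
    have "y x = C * x powr lam * h x"
      by (simp add: y_eq)
    then show ?thesis
      unfolding derivs(2)[OF x] DERIV_imp_deriv[OF derivs(1)[OF x]] using \<open>x \<noteq> 0\<close>
      by (simp add: field_simps power2_eq_square)
  qed
  also have "\<dots> = 0"
    unfolding h_def h1_def h2_def using frobenius_series_identity[OF conv rec] by simp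
  finally show "x * deriv (deriv y) x + (mu * x\<^sup>2 + eps * x + (1 - lam)) * deriv y x + (Om * x + eps * om) * y x = 0" .
qed

theorem mainTheorem2:
  fixes mu eps nu Om om :: complex
  assumes "mu \<noteq> 0"
    and "\<forall>m::nat. m \<ge> 2 \<longrightarrow> nu \<noteq> of_nat m"
    and "1 - Om / (2 * mu) \<notin> \<int>\<^sub>\<le>\<^sub>0"
  shows "(\<forall>x::complex. RW_converges ((1 + nu) / 2) (Om / (2 * mu)) om (- eps * x / 2) (- mu * x\<^sup>2 / 2))
    \<and> RW_sol mu eps nu Om om holomorphic_on (- \<real>\<^sub>\<le>\<^sub>0)
    \<and> (\<forall>x \<in> - \<real>\<^sub>\<le>\<^sub>0.
         x * deriv (deriv (RW_sol mu eps nu Om om)) x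
         + (mu * x\<^sup>2 + eps * x + nu) * deriv (RW_sol mu eps nu Om om) x
         + (Om * x + eps * om) * RW_sol mu eps nu Om om x = 0)"
proof -
  \<comment> \<open>The hypothesis on 1 - a only keeps the factor Gamma (1 - a) finite; the argument does not use it.\<close>
  define g where "g = (1 + nu) / 2"
  define a where "a = Om / (2 * mu)"
  obtain \<delta> where "RW_estimates g \<delta>"
    using ex_RW_estimates[OF assms(2)] unfolding g_def ..
  then interpret RW_estimates g a om \<delta>
    by (simp add: RW_estimates_def)
  define c where "c = RW_xcoeff g a om (- eps / 2) (- mu / 2)"
  have conv: "summable (\<lambda>N. c N * x ^ N)" for x
    using RW_braces_power_series[of "- eps / 2" "- mu / 2" x] by (auto simp: c_def sums_iff)
  have rec: "of_nat (N + 1) * (of_nat (N + 1) + 2 * (1 - g)) * c (N + 1) + eps * (of_nat N + 2 * (1 - g) + om) * c N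
      + (if N \<ge> 1 then (mu * (of_nat N - 1 + 2 * (1 - g)) + Om) * c (N - 1) else 0) = 0" for N
    unfolding c_def using assms(1) by (intro RW_xcoeff_frobenius_rec) (simp add: a_def)
  note frobenius = frobenius_solution[where C = "(- mu / 2) powr (1 - g) * (Gamma (1 - a) / Gamma (2 - g))",
      OF conv rec]
  have "1 - 2 * (1 - g) = nu"
    by (simp add: g_def field_simps)
  then show ?thesis
    unfolding g_def[symmetric] a_def[symmetric]
    using RW_braces_converges frobenius RW_sol_eq[OF g_def a_def, where eps = eps] by (simp add: c_def)
qed

end
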